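(* For an integer $k\ge 1$, let $T_k$ be the tree on $9k+4$ vertices with vertex set $\{v_0,v_1,v_2,v_3\}\cup\{x_{ij},y_{ij},z_{ij}: 1\le i\le 3,\ 1\le j\le k\}$ and edges $v_0v_i$ for $1\le i\le 3$, and $v_ix_{ij}$, $x_{ij}y_{ij}$, $y_{ij}z_{ij}$ for all $1\le i\le 3$, $1\le j\le k$ (so each $v_i$ has $k$ pendant paths $x_{ij}y_{ij}z_{ij}$ attached at $x_{ij}$). Then for every $k\ge 4$, the domination polynomial $D(T_k,x)$ is not log-concave.
   Context: A dominating set of a graph $G=(V,E)$ is a set $S\subseteq V$ such that every vertex is in $S$ or adjacent to a vertex of $S$. For a graph $G$ of order $n$, let $d_i$ be the number of dominating sets of $G$ of cardinality $i$; the domination polynomial is $D(G,x)=\sum_{i=0}^n d_i x^i$. A polynomial $a_0+a_1x+\cdots+a_nx^n$ is log-concave if $a_i^2\ge a_{i-1}a_{i+1}$ for every $1\le i\le n-1$. *)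

theory Defs
  imports Main
begin

definition dominating_set :: "'a set \<Rightarrow> ('a \<Rightarrow> 'a \<Rightarrow> bool) \<Rightarrow> 'a set \<Rightarrow> bool" where
  "dominating_set V E S \<longleftrightarrow> S \<subseteq> V \<and> (\<forall>v\<in>V. v \<in> S \<or> (\<exists>u\<in>S. E v u))"

definition dom_coeff :: "'a set \<Rightarrow> ('a \<Rightarrow> 'a \<Rightarrow> bool) \<Rightarrow> nat \<Rightarrow> nat" where
  "dom_coeff V E i = card {S. dominating_set V E S \<and> card S = i}"

definition log_concave_coeffs :: "(nat \<Rightarrow> nat) \<Rightarrow> nat \<Rightarrow> bool" where
  "log_concave_coeffs a n \<longleftrightarrow> (\<forall>i. 1 \<le> i \<and> i \<le> n - 1 \<longrightarrow> a (i - 1) * a (i + 1) \<le> (a i)^2)"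

definition dom_poly_log_concave :: "'a set \<Rightarrow> ('a \<Rightarrow> 'a \<Rightarrow> bool) \<Rightarrow> bool" where
  "dom_poly_log_concave V E \<longleftrightarrow> log_concave_coeffs (dom_coeff V E) (card V)"

datatype tvert = V nat | X nat nat | Y nat nat | Z nat nat

definition Tk_verts :: "nat \<Rightarrow> tvert set" where
  "Tk_verts k = {V i | i. i \<le> 3} \<union>
     {X i j | i j. 1 \<le> i \<and> i \<le> 3 \<and> 1 \<le> j \<and> j \<le> k} \<union>
     {Y i j | i j. 1 \<le> i \<and> i \<le> 3 \<and> 1 \<le> j \<and> j \<le> k} \<union>
     {Z i j | i j. 1 \<le> i \<and> i \<le> 3 \<and> 1 \<le> j \<and> j \<le> k}"

definition Tk_edges :: "nat \<Rightarrow> (tvert \<times> tvert) set" where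
  "Tk_edges k = {(V 0, V i) | i. 1 \<le> i \<and> i \<le> 3} \<union>
     {(V i, X i j) | i j. 1 \<le> i \<and> i \<le> 3 \<and> 1 \<le> j \<and> j \<le> k} \<union>
     {(X i j, Y i j) | i j. 1 \<le> i \<and> i \<le> 3 \<and> 1 \<le> j \<and> j \<le> k} \<union>
     {(Y i j, Z i j) | i j. 1 \<le> i \<and> i \<le> 3 \<and> 1 \<le> j \<and> j \<le> k}"

definition Tk_adj :: "nat \<Rightarrow> tvert \<Rightarrow> tvert \<Rightarrow> bool" where
  "Tk_adj k u v \<longleftrightarrow> (u, v) \<in> Tk_edges k \<or> (v, u) \<in> Tk_edges k"

end

(*
  Every dominating set of T_k contains y_ij or z_ij for each of the 3k pendant paths, since z_ij
  must be dominated; so it contains a set yz_choice k T (z on the paths in T, y on the others).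

  Lower bound for d_(3k+3): the sets A together with yz_choice k T are dominating and pairwise
  distinct for A = {v_1, v_2, v_3} and any T (2^(3k) sets), and for A = {x_lm} together with
  {v_i : i ~= l} and T containing no path of branch l except lm (2^(2k+1) sets for each of the
  3k choices of lm).

  Upper bound for d_(3k+2): a dominating set of size 3k+2 contains v_0, for otherwise every branch i
  needs v_i or some x_ij, which costs 3 more vertices. Hence it is {v_0, w} together with
  yz_choice k T, where T collects the paths missing y; on such a path x_ij must be dominated by
  w = x_ij or w = v_i. So either T is empty, or T = {ij} and w = x_ij, or w = v_l and T lies in
  branch l, giving d_(3k+2) <= (9k+4) + 3k + 3 * 2^k.

  For k >= 4 the lower bound exceeds the square of the upper bound, and d_(3k+1) >= 1, so
  d_(3k+1) d_(3k+3) > d_(3k+2)^2.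
*)
theory Submission
  imports Defs
begin

lemma card_Un3_le: "card (A \<union> B \<union> C) \<le> card A + card B + card C"
  using card_Un_le[of "A \<union> B" C] card_Un_le[of A B] by linarith

lemma dominating_setD:
  "dominating_set U E S \<Longrightarrow> v \<in> U \<Longrightarrow> v \<in> S \<or> (\<exists>u\<in>S. E v u)"
  by (simp add: dominating_set_def)

lemma finite_dominating_set: "dominating_set U E S \<Longrightarrow> finite U \<Longrightarrow> finite S"
  by (auto simp: dominating_set_def intro: finite_subset)

lemma finite_dominating_sets:
  "finite U \<Longrightarrow> finite {S. dominating_set U E S \<and> card S = i}"
  by (rule finite_subset[of _ "Pow U"]) (auto simp: dominating_set_def)

lemma card_le_dom_coeff:
  assumes "finite U" "\<And>S. S \<in> \<F> \<Longrightarrow> dominating_set U E S \<and> card S = i"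
  shows "card \<F> \<le> dom_coeff U E i"
  unfolding dom_coeff_def using assms by (intro card_mono finite_dominating_sets) auto

lemma dom_coeff_le_card:
  assumes "finite \<F>" "\<And>S. dominating_set U E S \<Longrightarrow> card S = i \<Longrightarrow> S \<in> \<F>"
  shows "dom_coeff U E i \<le> card \<F>"
  unfolding dom_coeff_def using assms by (intro card_mono) auto

lemma dom_coeff_pos_imp_le_card:
  assumes "finite U" "0 < dom_coeff U E i"
  shows "i \<le> card U"
proof -
  have "{S. dominating_set U E S \<and> card S = i} \<noteq> {}"
    using assms(2) unfolding dom_coeff_def by (metis card.empty less_irrefl)
  then obtain S where "dominating_set U E S" "card S = i"
    by blast
  then show ?thesis
    using assms(1) by (auto simp: dominating_set_def intro: card_mono)
qed

lemma not_log_concave_coeffs: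
  assumes "1 \<le> i" "i + 1 \<le> n" "0 < a (i - 1)" "a i ^ 2 < a (i + 1)"
  shows "\<not> log_concave_coeffs a n"
proof
  assume "log_concave_coeffs a n"
  then have "a (i - 1) * a (i + 1) \<le> a i ^ 2"
    using assms(1,2) by (simp add: log_concave_coeffs_def)
  moreover have "a (i + 1) \<le> a (i - 1) * a (i + 1)"
    using assms(3) by simp
  ultimately show False
    using assms(4) by linarith
qed

definition pendant_paths :: "nat \<Rightarrow> (nat \<times> nat) set" where
  "pendant_paths k = {1..3} \<times> {1..k}"

lemma mem_pendant_paths [simp]:
  "(i, j) \<in> pendant_paths k \<longleftrightarrow> 1 \<le> i \<and> i \<le> 3 \<and> 1 \<le> j \<and> j \<le> k"
  by (auto simp: pendant_paths_def)

lemma finite_pendant_paths [simp]: "finite (pendant_paths k)"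
  by (simp add: pendant_paths_def)

lemma card_pendant_paths: "card (pendant_paths k) = 3 * k"
  by (simp add: pendant_paths_def)

lemma Tk_verts_eq:
  "Tk_verts k = V ` {..3} \<union> case_prod X ` pendant_paths k \<union> case_prod Y ` pendant_paths k
     \<union> case_prod Z ` pendant_paths k"
  by (auto simp: Tk_verts_def)

lemma finite_Tk_verts [simp]: "finite (Tk_verts k)"
  by (simp add: Tk_verts_eq)

lemma card_Tk_verts_le: "card (Tk_verts k) \<le> 9 * k + 4"
proof -
  have "card (Tk_verts k) \<le> card (V ` {..3}) + card (case_prod X ` pendant_paths k)
      + card (case_prod Y ` pendant_paths k) + card (case_prod Z ` pendant_paths k)"
    unfolding Tk_verts_eq by (meson card_Un_le add_le_mono le_refl order_trans)
  also have "\<dots> \<le> 4 + 3 * k + 3 * k + 3 * k"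
    by (intro add_mono card_image_le[THEN order_trans]) (simp_all add: card_pendant_paths)
  finally show ?thesis by simp
qed

lemma Tk_adj_V0: "Tk_adj k (V 0) u \<longleftrightarrow> (\<exists>i. 1 \<le> i \<and> i \<le> 3 \<and> u = V i)"
  by (auto simp: Tk_adj_def Tk_edges_def)

lemma Tk_adj_V:
  "1 \<le> i \<Longrightarrow> Tk_adj k (V i) u \<longleftrightarrow> i \<le> 3 \<and> (u = V 0 \<or> (\<exists>j. 1 \<le> j \<and> j \<le> k \<and> u = X i j))"
  by (auto simp: Tk_adj_def Tk_edges_def)

lemma Tk_adj_X: "Tk_adj k (X i j) u \<longleftrightarrow> (i, j) \<in> pendant_paths k \<and> (u = V i \<or> u = Y i j)"
  by (auto simp: Tk_adj_def Tk_edges_def)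

lemma Tk_adj_Y: "Tk_adj k (Y i j) u \<longleftrightarrow> (i, j) \<in> pendant_paths k \<and> (u = X i j \<or> u = Z i j)"
  by (auto simp: Tk_adj_def Tk_edges_def)

lemma Tk_adj_Z: "Tk_adj k (Z i j) u \<longleftrightarrow> (i, j) \<in> pendant_paths k \<and> u = Y i j"
  by (auto simp: Tk_adj_def Tk_edges_def)

definition yz_choice :: "nat \<Rightarrow> (nat \<times> nat) set \<Rightarrow> tvert set" where
  "yz_choice k T = case_prod Y ` (pendant_paths k - T) \<union> case_prod Z ` T"

lemma mem_yz_choice [simp]:
  "V i \<notin> yz_choice k T"
  "X i j \<notin> yz_choice k T"
  "Y i j \<in> yz_choice k T \<longleftrightarrow> (i, j) \<in> pendant_paths k - T"
  "Z i j \<in> yz_choice k T \<longleftrightarrow> (i, j) \<in> T"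
  by (auto simp: yz_choice_def)

lemma card_yz_choice:
  assumes "T \<subseteq> pendant_paths k"
  shows "card (yz_choice k T) = 3 * k"
proof -
  have "yz_choice k T = (\<lambda>(i, j). if (i, j) \<in> T then Z i j else Y i j) ` pendant_paths k"
    using assms by (force simp: yz_choice_def)
  moreover have "inj_on (\<lambda>(i, j). if (i, j) \<in> T then Z i j else Y i j) (pendant_paths k)"
    by (auto simp: inj_on_def split: if_splits)
  ultimately show ?thesis
    by (simp add: card_image card_pendant_paths)
qed

lemma finite_yz_choice: "T \<subseteq> pendant_paths k \<Longrightarrow> finite (yz_choice k T)"
  using finite_subset[OF _ finite_pendant_paths] by (simp add: yz_choice_def)

lemma yz_choice_subset_Tk_verts: "T \<subseteq> pendant_paths k \<Longrightarrow> yz_choice k T \<subseteq> Tk_verts k"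
  by (auto simp: yz_choice_def Tk_verts_eq)

lemma dominating_set_Un_yz_choice:
  assumes "A \<subseteq> Tk_verts k" "T \<subseteq> pendant_paths k"
    and V_dominated: "\<And>i. i \<le> 3 \<Longrightarrow> V i \<in> A \<or> (\<exists>u\<in>A. Tk_adj k (V i) u)"
    and X_dominated: "\<And>i j. (i, j) \<in> T \<Longrightarrow> X i j \<in> A \<or> V i \<in> A"
  shows "dominating_set (Tk_verts k) (Tk_adj k) (A \<union> yz_choice k T)"
  unfolding dominating_set_def
proof (intro conjI ballI)
  show "A \<union> yz_choice k T \<subseteq> Tk_verts k"
    using assms(1,2) yz_choice_subset_Tk_verts by blast
next
  fix v assume "v \<in> Tk_verts k"
  then consider (V) i where "v = V i" "i \<le> 3"
    | (X) i j where "v = X i j" "(i, j) \<in> pendant_paths k"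
    | (Y) i j where "v = Y i j" "(i, j) \<in> pendant_paths k"
    | (Z) i j where "v = Z i j" "(i, j) \<in> pendant_paths k"
    unfolding Tk_verts_eq by auto
  then show "v \<in> A \<union> yz_choice k T \<or> (\<exists>u\<in>A \<union> yz_choice k T. Tk_adj k v u)"
  proof cases
    case V
    then show ?thesis using V_dominated by blast
  next
    case X
    then show ?thesis using X_dominated[of i j] by (cases "(i, j) \<in> T") (auto simp: Tk_adj_X)
  next
    case Y
    then show ?thesis by (cases "(i, j) \<in> T") (auto simp: Tk_adj_Y)
  next
    case Z
    then show ?thesis by (cases "(i, j) \<in> T") (auto simp: Tk_adj_Z)
  qed
qed

section \<open>Lower bound on d_(3k+3)\<close>

lemma inj_V: "inj V"
  by (rule injI) simp

definition branch_core :: "nat \<times> nat \<Rightarrow> tvert set" where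
  "branch_core = (\<lambda>(l, m). insert (X l m) (V ` ({1..3} - {l})))"

definition cores :: "nat \<Rightarrow> tvert set set" where
  "cores k = insert (V ` {1..3}) (branch_core ` pendant_paths k)"

definition z_choices :: "nat \<Rightarrow> tvert set \<Rightarrow> (nat \<times> nat) set set" where
  "z_choices k A = {T. T \<subseteq> pendant_paths k \<and> (\<forall>(i, j)\<in>T. X i j \<in> A \<or> V i \<in> A)}"

lemma core_subset_Tk_verts: "A \<in> cores k \<Longrightarrow> A \<subseteq> Tk_verts k"
  by (auto simp: cores_def branch_core_def Tk_verts_eq)

lemma core_subset_range_V_X: "A \<in> cores k \<Longrightarrow> A \<subseteq> range V \<union> range (case_prod X)"
  by (auto simp: cores_def branch_core_def)

lemma card_core: "A \<in> cores k \<Longrightarrow> card A = 3"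
proof (unfold cores_def, elim insertE imageE)
  show "card A = 3" if "A = V ` {1..3}"
    using that by (simp add: card_image[OF inj_on_subset[OF inj_V]])
  show "card A = 3" if A: "A = branch_core p" and p: "p \<in> pendant_paths k" for p
  proof -
    obtain l m where p: "p = (l, m)" "l \<in> {1..3}"
      using p by (cases p) auto
    have "card (V ` ({1..3} - {l})) = 2"
      using p(2) by (simp add: card_image[OF inj_on_subset[OF inj_V]])
    then show ?thesis
      using A p(1) by (simp add: branch_core_def card_insert_if image_iff)
  qed
qed

lemma core_dominates_V:
  assumes "A \<in> cores k" "i \<le> 3"
  shows "V i \<in> A \<or> (\<exists>u\<in>A. Tk_adj k (V i) u)"
  using assms(1) unfolding cores_def
proof (elim insertE imageE)
  show ?thesis if "A = V ` {1..3}"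
    using that assms(2) by (cases "i = 0") (auto simp: Tk_adj_V0)
  show ?thesis if A: "A = branch_core p" and p: "p \<in> pendant_paths k" for p
  proof -
    obtain l m where p: "p = (l, m)" "(l, m) \<in> pendant_paths k"
      using p by (cases p) auto
    define l' where "l' = (if l = 1 then 2 else 1 :: nat)"
    have "V l' \<in> A" "Tk_adj k (V 0) (V l')"
      using A p by (auto simp: branch_core_def l'_def Tk_adj_V0)
    moreover have "X l m \<in> A" "Tk_adj k (V l) (X l m)"
      using A p by (auto simp: branch_core_def Tk_adj_V)
    moreover have "V i \<in> A" if "1 \<le> i" "i \<noteq> l"
      using that assms(2) A p by (auto simp: branch_core_def)
    ultimately show ?thesis
      by (metis less_one not_less)
  qed
qed

lemma z_choices_V123: "z_choices k (V ` {1..3}) = Pow (pendant_paths k)"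
  by (auto simp: z_choices_def)

lemma z_choices_branch_core:
  assumes "(l, m) \<in> pendant_paths k"
  shows "z_choices k (branch_core (l, m)) = Pow (pendant_paths k - {l} \<times> ({1..k} - {m}))"
  using assms by (auto simp: z_choices_def branch_core_def inj_image_mem_iff[OF inj_V])

lemma X_mem_branch_core: "X i j \<in> branch_core (l, m) \<longleftrightarrow> i = l \<and> j = m"
  by (auto simp: branch_core_def)

lemma finite_z_choices: "finite (z_choices k A)"
  by (rule finite_subset[of _ "Pow (pendant_paths k)"]) (auto simp: z_choices_def)

lemma card_z_choices_branch_core:
  assumes "(l, m) \<in> pendant_paths k"
  shows "card (z_choices k (branch_core (l, m))) = 2 ^ (2 * k + 1)"
proof -
  have "{l} \<times> ({1..k} - {m}) \<subseteq> pendant_paths k" "card ({l} \<times> ({1..k} - {m})) = k - 1"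
    using assms by auto
  then have "card (pendant_paths k - {l} \<times> ({1..k} - {m})) = 2 * k + 1"
    using assms by (simp add: card_Diff_subset card_pendant_paths)
  then show ?thesis
    using assms by (simp add: z_choices_branch_core card_Pow)
qed

lemma card_Sigma_cores:
  "card (Sigma (cores k) (z_choices k)) = 2 ^ (3 * k) + 3 * k * 2 ^ (2 * k + 1)"
proof -
  have "inj_on branch_core (pendant_paths k)"
  proof (rule inj_onI, clarify)
    fix l m l' m' assume "branch_core (l, m) = branch_core (l', m')"
    then show "l = l' \<and> m = m'"
      using X_mem_branch_core[of l m l m] X_mem_branch_core[of l m l' m'] by simp
  qed
  moreover have "V ` {1..3} \<notin> branch_core ` pendant_paths k"
  proof
    assume "V ` {1..3} \<in> branch_core ` pendant_paths k"
    then obtain l m where "V ` {1..3} = branch_core (l, m)"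
      by auto
    then show False
      using X_mem_branch_core[of l m l m] by auto
  qed
  ultimately have "card (Sigma (cores k) (z_choices k))
      = card (z_choices k (V ` {1..3})) + (\<Sum>p\<in>pendant_paths k. card (z_choices k (branch_core p)))"
    by (simp add: cores_def finite_z_choices sum.reindex)
  also have "\<dots> = 2 ^ (3 * k) + (\<Sum>p\<in>pendant_paths k. 2 ^ (2 * k + 1))"
    unfolding z_choices_V123 using card_z_choices_branch_core
    by (simp add: card_Pow card_pendant_paths split_paired_all)
  finally show ?thesis
    by (simp add: card_pendant_paths)
qed

lemma inj_on_Un_yz_choice:
  "inj_on (\<lambda>(A, T). A \<union> yz_choice k T) {(A, T). A \<subseteq> range V \<union> range (case_prod X)}"
proof -
  have recover: "A = (A \<union> yz_choice k T) \<inter> (range V \<union> range (case_prod X))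
      \<and> T = {(i, j). Z i j \<in> A \<union> yz_choice k T}"
    if "A \<subseteq> range V \<union> range (case_prod X)" for A T
    using that by (auto simp: yz_choice_def)
  show ?thesis
    by (rule inj_onI) (clarsimp, metis recover)
qed

lemma dom_coeff_Tk_3k3_ge:
  "2 ^ (3 * k) + 3 * k * 2 ^ (2 * k + 1) \<le> dom_coeff (Tk_verts k) (Tk_adj k) (3 * k + 3)"
proof -
  let ?f = "\<lambda>(A, T). A \<union> yz_choice k T"
  have "inj_on ?f (Sigma (cores k) (z_choices k))"
    by (rule inj_on_subset[OF inj_on_Un_yz_choice]) (auto dest: core_subset_range_V_X)
  then have "2 ^ (3 * k) + 3 * k * 2 ^ (2 * k + 1) = card (?f ` Sigma (cores k) (z_choices k))"
    by (simp add: card_image card_Sigma_cores)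
  also have "\<dots> \<le> dom_coeff (Tk_verts k) (Tk_adj k) (3 * k + 3)"
  proof (rule card_le_dom_coeff[OF finite_Tk_verts], clarify)
    fix A T assume A: "A \<in> cores k" and T: "T \<in> z_choices k A"
    have Tp: "T \<subseteq> pendant_paths k"
      using T by (simp add: z_choices_def)
    show "dominating_set (Tk_verts k) (Tk_adj k) (A \<union> yz_choice k T) \<and>
        card (A \<union> yz_choice k T) = 3 * k + 3"
    proof
      show "dominating_set (Tk_verts k) (Tk_adj k) (A \<union> yz_choice k T)"
        using T by (intro dominating_set_Un_yz_choice core_subset_Tk_verts core_dominates_V A Tp)
          (auto simp: z_choices_def)
      have "A \<inter> yz_choice k T = {}"
        using core_subset_range_V_X[OF A] by auto
      moreover have "finite A"
        using card_core[OF A] card.infinite by fastforce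
      ultimately show "card (A \<union> yz_choice k T) = 3 * k + 3"
        using Tp by (simp add: card_Un_disjoint finite_yz_choice card_yz_choice card_core[OF A])
    qed
  qed
  finally show ?thesis .
qed

section \<open>Upper bound on d_(3k+2)\<close>

lemma yz_choice_subset_dominating_set:
  assumes "dominating_set (Tk_verts k) (Tk_adj k) S"
  shows "yz_choice k {(i, j) \<in> pendant_paths k. Y i j \<notin> S} \<subseteq> S"
proof
  fix v assume v: "v \<in> yz_choice k {(i, j) \<in> pendant_paths k. Y i j \<notin> S}"
  show "v \<in> S"
  proof (cases "v \<in> case_prod Y ` pendant_paths k")
    case True
    then show ?thesis using v by (auto simp: yz_choice_def)
  next
    case False
    then obtain i j where "v = Z i j" "(i, j) \<in> pendant_paths k" "Y i j \<notin> S"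
      using v by (auto simp: yz_choice_def)
    moreover have "Z i j \<in> Tk_verts k"
      using \<open>(i, j) \<in> pendant_paths k\<close> by (auto simp: Tk_verts_eq)
    ultimately show ?thesis
      using dominating_setD[OF assms, of "Z i j"] by (auto simp: Tk_adj_Z)
  qed
qed

lemma branch_meets_dominating_set:
  assumes "dominating_set (Tk_verts k) (Tk_adj k) S" "V 0 \<notin> S" "l \<in> {1..3}"
  obtains u where "u \<in> S" "u = V l \<or> (\<exists>m. u = X l m)"
proof -
  have "V l \<in> Tk_verts k"
    using assms(3) by (simp add: Tk_verts_def)
  then have "V l \<in> S \<or> (\<exists>u\<in>S. Tk_adj k (V l) u)"
    by (rule dominating_setD[OF assms(1)])
  then show ?thesis
    using assms(2,3) that by (auto simp: Tk_adj_V)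
qed

lemma V0_mem_small_dominating_set:
  assumes dom: "dominating_set (Tk_verts k) (Tk_adj k) S" and card: "card S \<le> 3 * k + 2"
  shows "V 0 \<in> S"
proof (rule ccontr)
  assume "V 0 \<notin> S"
  note branch = branch_meets_dominating_set[OF dom this]
  obtain u1 where u1: "u1 \<in> S" "u1 = V 1 \<or> (\<exists>m. u1 = X 1 m)"
    by (rule branch[of 1]) auto
  obtain u2 where u2: "u2 \<in> S" "u2 = V 2 \<or> (\<exists>m. u2 = X 2 m)"
    by (rule branch[of 2]) auto
  obtain u3 where u3: "u3 \<in> S" "u3 = V 3 \<or> (\<exists>m. u3 = X 3 m)"
    by (rule branch[of 3]) auto
  let ?T = "{(i, j) \<in> pendant_paths k. Y i j \<notin> S}"
  let ?C = "yz_choice k ?T"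
  have "?T \<subseteq> pendant_paths k"
    by blast
  then have "card ?C = 3 * k" "finite ?C"
    by (rule card_yz_choice, rule finite_yz_choice)
  then have "card (insert u1 (insert u2 (insert u3 ?C))) = 3 * k + 3"
    using u1(2) u2(2) u3(2) by (elim disjE exE) simp_all
  moreover have "insert u1 (insert u2 (insert u3 ?C)) \<subseteq> S"
    using u1 u2 u3 yz_choice_subset_dominating_set[OF dom] by blast
  then have "card (insert u1 (insert u2 (insert u3 ?C))) \<le> card S"
    by (rule card_mono[OF finite_dominating_set[OF dom finite_Tk_verts]])
  ultimately show False
    using card by linarith
qed

definition params_3k2 :: "nat \<Rightarrow> (tvert \<times> (nat \<times> nat) set) set" where
  "params_3k2 k = Tk_verts k \<times> {{}} \<union> (\<lambda>(i, j). (X i j, {(i, j)})) ` pendant_paths k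
     \<union> (\<Union>l\<in>{1..3}. {V l} \<times> Pow ({l} \<times> {1..k}))"

lemma card_params_3k2_le: "card (params_3k2 k) \<le> 3 * 2 ^ k + 12 * k + 4"
proof -
  let ?A = "Tk_verts k \<times> {{} :: (nat \<times> nat) set}"
  let ?B = "(\<lambda>(i, j). (X i j, {(i, j)})) ` pendant_paths k"
  let ?C = "\<Union>l\<in>{1..3::nat}. {V l} \<times> Pow ({l} \<times> {1..k})"
  have "card ?A \<le> 9 * k + 4"
    using card_Tk_verts_le by (simp add: card_cartesian_product)
  moreover have "card ?B \<le> 3 * k"
    using card_image_le[OF finite_pendant_paths, of "\<lambda>(i, j). (X i j, {(i, j)})" k]
    by (simp add: card_pendant_paths)
  moreover have "card ?C \<le> (\<Sum>l\<in>{1..3::nat}. card ({V l} \<times> Pow ({l} \<times> {1..k})))"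
    by (rule card_UN_le) simp
  moreover have "(\<Sum>l\<in>{1..3::nat}. card ({V l} \<times> Pow ({l} \<times> {1..k}))) = 3 * 2 ^ k"
    by (simp add: card_cartesian_product card_Pow)
  moreover have "card (params_3k2 k) \<le> card ?A + card ?B + card ?C"
    unfolding params_3k2_def by (rule card_Un3_le)
  ultimately show ?thesis
    by linarith
qed

lemma mem_params_3k2I:
  assumes w: "w \<in> Tk_verts k" and T: "T \<subseteq> pendant_paths k"
    and X_dominated: "\<And>i j. (i, j) \<in> T \<Longrightarrow> w = X i j \<or> w = V i"
  shows "(w, T) \<in> params_3k2 k"
proof (cases "T = {}")
  case True
  then show ?thesis
    using w by (simp add: params_3k2_def)
next
  case False
  then obtain i j where ij: "(i, j) \<in> T"
    by auto
  show ?thesis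
  proof (cases "w = V i")
    case True
    have "a = i \<and> b \<in> {1..k}" if "(a, b) \<in> T" for a b
      using X_dominated[OF that] True T that by auto
    then have "(w, T) \<in> {V i} \<times> Pow ({i} \<times> {1..k})"
      using True by auto
    moreover have "i \<in> {1..3}"
      using ij T by auto
    ultimately show ?thesis
      unfolding params_3k2_def by blast
  next
    case False
    then have w_eq: "w = X i j"
      using X_dominated[OF ij] by blast
    have "p = (i, j)" if "p \<in> T" for p
      using X_dominated[of "fst p" "snd p"] that unfolding w_eq by auto
    then have "T = {(i, j)}"
      using ij by blast
    moreover have "(X i j, {(i, j)}) \<in> (\<lambda>(i, j). (X i j, {(i, j)})) ` pendant_paths k"
      using ij T by (intro image_eqI[of _ _ "(i, j)"]) auto
    ultimately have "(w, T) \<in> (\<lambda>(i, j). (X i j, {(i, j)})) ` pendant_paths k"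
      using w_eq by simp
    then show ?thesis
      unfolding params_3k2_def by (rule UnI1[OF UnI2])
  qed
qed

lemma dominating_set_3k2_form:
  assumes dom: "dominating_set (Tk_verts k) (Tk_adj k) S" and card: "card S = 3 * k + 2"
  shows "\<exists>(w, T)\<in>params_3k2 k. S = insert (V 0) (insert w (yz_choice k T))"
proof -
  define T where "T = {(i, j) \<in> pendant_paths k. Y i j \<notin> S}"
  let ?C = "yz_choice k T"
  have T: "T \<subseteq> pendant_paths k"
    by (auto simp: T_def)
  have sub: "insert (V 0) ?C \<subseteq> S"
    using V0_mem_small_dominating_set[OF dom] card yz_choice_subset_dominating_set[OF dom]
    by (simp add: T_def)
  have "card (insert (V 0) ?C) = 3 * k + 1"
    using T by (simp add: card_yz_choice finite_yz_choice)
  then have "card (S - insert (V 0) ?C) = 1"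
    using card card_Diff_subset[OF _ sub] T by (simp add: finite_yz_choice)
  then obtain w where w: "S - insert (V 0) ?C = {w}"
    by (rule card_1_singletonE)
  have S_eq: "S = insert (V 0) (insert w ?C)"
    using w sub by blast
  have "w \<in> Tk_verts k"
    using S_eq dom by (simp add: dominating_set_def)
  moreover have "w = X i j \<or> w = V i" if "(i, j) \<in> T" for i j
  proof -
    have ij: "(i, j) \<in> pendant_paths k" "Y i j \<notin> S"
      using that by (auto simp: T_def)
    then have "X i j \<in> Tk_verts k"
      by (auto simp: Tk_verts_eq)
    then have "X i j \<in> S \<or> V i \<in> S"
      using dominating_setD[OF dom, of "X i j"] ij by (auto simp: Tk_adj_X)
    moreover have "X i j \<in> S - insert (V 0) ?C" if "X i j \<in> S"
      using that by simp
    moreover have "V i \<in> S - insert (V 0) ?C" if "V i \<in> S"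
      using that ij(1) by simp
    ultimately have "X i j \<in> S - insert (V 0) ?C \<or> V i \<in> S - insert (V 0) ?C"
      by blast
    then show ?thesis
      unfolding w by auto
  qed
  ultimately have "(w, T) \<in> params_3k2 k"
    using T by (intro mem_params_3k2I)
  then show ?thesis
    using S_eq by (intro bexI[of _ "(w, T)"]) simp_all
qed

lemma dom_coeff_Tk_3k2_le: "dom_coeff (Tk_verts k) (Tk_adj k) (3 * k + 2) \<le> 3 * 2 ^ k + 12 * k + 4"
proof -
  let ?f = "\<lambda>(w, T). insert (V 0) (insert w (yz_choice k T))"
  have "finite (params_3k2 k)"
    by (simp add: params_3k2_def)
  then have "dom_coeff (Tk_verts k) (Tk_adj k) (3 * k + 2) \<le> card (?f ` params_3k2 k)"
    by (intro dom_coeff_le_card) (auto dest!: dominating_set_3k2_form)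
  also have "\<dots> \<le> card (params_3k2 k)"
    by (rule card_image_le) fact
  also have "\<dots> \<le> 3 * 2 ^ k + 12 * k + 4"
    by (rule card_params_3k2_le)
  finally show ?thesis .
qed

section \<open>Failure of log-concavity at 3k+2\<close>

lemma dom_coeff_Tk_3k1_pos: "0 < dom_coeff (Tk_verts k) (Tk_adj k) (3 * k + 1)"
proof -
  have "dominating_set (Tk_verts k) (Tk_adj k) ({V 0} \<union> yz_choice k {})"
  proof (rule dominating_set_Un_yz_choice)
    show "V i \<in> {V 0} \<or> (\<exists>u\<in>{V 0}. Tk_adj k (V i) u)" if "i \<le> 3" for i
      using that by (cases "i = 0") (auto simp: Tk_adj_V)
  qed (auto simp: Tk_verts_def)
  moreover have "card ({V 0} \<union> yz_choice k {}) = 3 * k + 1"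
    by (simp add: card_yz_choice finite_yz_choice)
  ultimately have "card {{V 0} \<union> yz_choice k {}} \<le> dom_coeff (Tk_verts k) (Tk_adj k) (3 * k + 1)"
    by (intro card_le_dom_coeff) auto
  then show ?thesis
    by simp
qed

lemma four_mult_le_two_power: "4 \<le> k \<Longrightarrow> 4 * k \<le> (2::nat) ^ k"
  by (induction k rule: dec_induct) simp_all

lemma sq_upper_bound_lt_lower_bound:
  fixes k :: nat
  assumes "4 \<le> k"
  shows "(3 * 2 ^ k + 12 * k + 4) ^ 2 < 2 ^ (3 * k) + 3 * k * 2 ^ (2 * k + 1)"
proof -
  define a :: nat where "a = 2 ^ k"
  have a: "4 * k \<le> a" "16 \<le> a"
    using four_mult_le_two_power[OF assms] assms unfolding a_def by linarith+
  have "(3 * 2 ^ k + 12 * k + 4) ^ 2 \<le> (6 * a + 4) ^ 2"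
    using a(1) unfolding a_def by (intro power_mono) simp_all
  also have "\<dots> = 36 * (a * a) + 48 * a + 16"
    by (simp add: power2_eq_square algebra_simps)
  also have "\<dots> < 40 * (a * a)"
    using mult_le_mono1[OF a(2), of a] a(2) by linarith
  also have "\<dots> \<le> a * (a * a) + 24 * (a * a)"
    using mult_le_mono1[OF a(2), of "a * a"] by linarith
  also have "\<dots> \<le> a * (a * a) + 6 * k * (a * a)"
    using mult_le_mono1[of 24 "6 * k" "a * a"] assms by linarith
  also have "\<dots> = 2 ^ (3 * k) + 3 * k * 2 ^ (2 * k + 1)"
  proof -
    have "(2::nat) ^ (3 * k) = a ^ 3" "(2::nat) ^ (2 * k) = a ^ 2"
      unfolding a_def power_mult[symmetric] by (simp_all add: mult.commute)
    then show ?thesis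
      by (simp add: power2_eq_square power3_eq_cube)
  qed
  finally show ?thesis .
qed

theorem proposition2p1:
  fixes k :: nat
  assumes "k \<ge> 4"
  shows "\<not> dom_poly_log_concave (Tk_verts k) (Tk_adj k)"
proof -
  let ?d = "dom_coeff (Tk_verts k) (Tk_adj k)"
  have "?d (3 * k + 2) ^ 2 \<le> (3 * 2 ^ k + 12 * k + 4) ^ 2"
    using dom_coeff_Tk_3k2_le by (rule power_mono) simp
  also have "\<dots> < 2 ^ (3 * k) + 3 * k * 2 ^ (2 * k + 1)"
    using assms by (rule sq_upper_bound_lt_lower_bound)
  also have "\<dots> \<le> ?d (3 * k + 3)"
    by (rule dom_coeff_Tk_3k3_ge)
  finally have jump: "?d (3 * k + 2) ^ 2 < ?d (3 * k + 3)" .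
  then have n: "3 * k + 3 \<le> card (Tk_verts k)"
    by (intro dom_coeff_pos_imp_le_card[OF finite_Tk_verts, where E = "Tk_adj k"]) linarith
  have idx: "3 * k + 2 - 1 = 3 * k + 1" "3 * k + 2 + 1 = 3 * k + 3"
    by simp_all
  show ?thesis
    unfolding dom_poly_log_concave_def
  proof (rule not_log_concave_coeffs[of "3 * k + 2"])
    show "0 < ?d (3 * k + 2 - 1)"
      unfolding idx by (rule dom_coeff_Tk_3k1_pos)
    show "?d (3 * k + 2) ^ 2 < ?d (3 * k + 2 + 1)"
      unfolding idx by (rule jump)
    show "3 * k + 2 + 1 \<le> card (Tk_verts k)"
      unfolding idx by (rule n)
  qed simp
qed

end
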